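(* Let $g\ge 1$ and let $\Gamma_g$ be the chain of $g$ loops with edge lengths $\ell_1,m_1,\dots,\ell_g,m_g$ satisfying the genericity condition. Then there is no divisor $D$ on $\Gamma_g$ of rank $r(D)\ge 1$ such that $K_{\Gamma_g}-2D$ is linearly equivalent to an effective divisor. Equivalently, there is no pair $(D,E)$ of divisors on $\Gamma_g$ with $r(D)\ge 1$, $E$ effective and $2D+E\sim K_{\Gamma_g}$.
   Context: The metric graph $\Gamma_g$: it has vertices $v_0,v_1,\dots,v_g$, and for each $i=1,\dots,g$ two edges joining $v_{i-1}$ and $v_i$, of positive lengths $\ell_i$ and $m_i$. The union of these two edges is the $i$-th loop $\bar\gamma_i$, a circle of circumference $\ell_i+m_i$; consecutive loops $\bar\gamma_i,\bar\gamma_{i+1}$ meet only at $v_i$. Genericity condition: for each $i$, the ratio $\ell_i/m_i$ is not equal to $a/b$ for any positive integers $a,b$ with $a+b\le 2g-2$. A divisor on a metric graph $\Gamma$ is a finite formal $\mathbb Z$-linear combination of points of $\Gamma$; its degree is the sum of coefficients; it is effective if all coefficients are $\ge 0$. A piecewise linear function $\psi$ on $\Gamma$ is a continuous function which is linear with integer slope on each edge of some finite subdivision of $\Gamma$; $\mathrm{ord}_p(\psi)$ is the sum of the incoming slopes of $\psi$ along all edge directions at $p$, and $\mathrm{div}(\psi)=\sum_p \mathrm{ord}_p(\psi)\,p$. Two divisors $D,D'$ are linearly equivalent, $D\sim D'$, if $D-D'=\mathrm{div}(\psi)$ for some such $\psi$. The rank $r(D)$ is the largest integer $r$ such that $D-F$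 is linearly equivalent to an effective divisor for every effective divisor $F$ of degree $r$ ($r(D)=-1$ if $D$ is not equivalent to an effective divisor). The canonical divisor is $K_\Gamma=\sum_{v}(\mathrm{val}(v)-2)\,v$; for $\Gamma_g$ this is $K_{\Gamma_g}=2(v_1+\dots+v_{g-1})$, of degree $2g-2$. *)

theory Defs
  imports "HOL-Analysis.Analysis"
begin

text \<open>Loop i is parametrised by the circle [0, L i) with L i = l i + m i;
  position 0 is v_(i-1), position l i is v_i; the top edge is [0, l i],
  the bottom edge is [l i, L i] (with L i identified with 0).
  Points are represented canonically as pairs (i, t); the vertex v_i
  (1 <= i < g), which lies on loops i and i+1, is represented by (i+1, 0).\<close>

definition circ :: "(nat \<Rightarrow> real) \<Rightarrow> (nat \<Rightarrow> real) \<Rightarrow> nat \<Rightarrow> real" where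
  "circ l m i = l i + m i"

definition loc :: "nat \<Rightarrow> (nat \<Rightarrow> real) \<Rightarrow> nat \<Rightarrow> real \<Rightarrow> nat \<times> real" where
  "loc g l i t = (if i < g \<and> t = l i then (Suc i, 0) else (i, t))"

definition pos :: "nat \<Rightarrow> (nat \<Rightarrow> real) \<Rightarrow> (nat \<Rightarrow> real) \<Rightarrow> nat \<Rightarrow> real \<Rightarrow> nat \<times> real" where
  "pos g l m i x = loc g l i (if x = circ l m i then 0 else x)"

definition Pts :: "nat \<Rightarrow> (nat \<Rightarrow> real) \<Rightarrow> (nat \<Rightarrow> real) \<Rightarrow> (nat \<times> real) set" where
  "Pts g l m = {loc g l i t | i t. 1 \<le> i \<and> i \<le> g \<and> 0 \<le> t \<and> t < circ l m i}"

definition vtx :: "nat \<Rightarrow> (nat \<Rightarrow> real) \<Rightarrow> nat \<Rightarrow> nat \<times> real" where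
  "vtx g l i = (if i = 0 then (1, 0) else loc g l i (l i))"

definition generic_chain :: "nat \<Rightarrow> (nat \<Rightarrow> real) \<Rightarrow> (nat \<Rightarrow> real) \<Rightarrow> bool" where
  "generic_chain g l m \<longleftrightarrow>
     (\<forall>i\<in>{1..g}. 0 < l i \<and> 0 < m i \<and>
        (\<forall>a b :: nat. 0 < a \<and> 0 < b \<and> a + b \<le> 2 * g - 2 \<longrightarrow> l i / m i \<noteq> real a / real b))"

type_synonym divisor = "nat \<times> real \<Rightarrow> int"

definition is_divisor :: "nat \<Rightarrow> (nat \<Rightarrow> real) \<Rightarrow> (nat \<Rightarrow> real) \<Rightarrow> divisor \<Rightarrow> bool" where
  "is_divisor g l m D \<longleftrightarrow> finite {p. D p \<noteq> 0} \<and> {p. D p \<noteq> 0} \<subseteq> Pts g l m"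

definition deg :: "divisor \<Rightarrow> int" where
  "deg D = sum D {p. D p \<noteq> 0}"

definition effective :: "divisor \<Rightarrow> bool" where
  "effective D \<longleftrightarrow> (\<forall>p. 0 \<le> D p)"

text \<open>Piecewise linear functions with integer slopes: on every loop, the function
  x \<mapsto> psi (pos i x) on [0, circ i] is affine with integer slope on each piece of a
  finite subdivision. (Continuity on Gamma_g is automatic.)\<close>
definition is_PL :: "nat \<Rightarrow> (nat \<Rightarrow> real) \<Rightarrow> (nat \<Rightarrow> real) \<Rightarrow> (nat \<times> real \<Rightarrow> real) \<Rightarrow> bool" where
  "is_PL g l m \<psi> \<longleftrightarrow>
     (\<forall>i\<in>{1..g}. \<exists>xs :: real list.
        sorted_wrt (<) xs \<and> xs \<noteq> [] \<and> hd xs = 0 \<and> last xs = circ l m i \<and>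
        (\<forall>j. Suc j < length xs \<longrightarrow>
           (\<exists>(s::int) (c::real). \<forall>x\<in>{xs ! j .. xs ! Suc j}. \<psi> (pos g l m i x) = c + of_int s * x)))"

definition rslope :: "nat \<Rightarrow> (nat \<Rightarrow> real) \<Rightarrow> (nat \<Rightarrow> real) \<Rightarrow> (nat \<times> real \<Rightarrow> real) \<Rightarrow> nat \<Rightarrow> real \<Rightarrow> real" where
  "rslope g l m \<psi> i t = (THE s. ((\<lambda>x. \<psi> (pos g l m i x)) has_real_derivative s) (at_right t))"

definition lslope :: "nat \<Rightarrow> (nat \<Rightarrow> real) \<Rightarrow> (nat \<Rightarrow> real) \<Rightarrow> (nat \<times> real \<Rightarrow> real) \<Rightarrow> nat \<Rightarrow> real \<Rightarrow> real" where
  "lslope g l m \<psi> i t = (THE s. ((\<lambda>x. \<psi> (pos g l m i x)) has_real_derivative s)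
        (at_left (if t = 0 then circ l m i else t)))"

text \<open>ord_p(psi): sum of the incoming slopes along all edge directions at p.
  The directions at p correspond to the incidences (i,t) with loc i t = p,
  each contributing the two directions along loop i.\<close>
definition ord :: "nat \<Rightarrow> (nat \<Rightarrow> real) \<Rightarrow> (nat \<Rightarrow> real) \<Rightarrow> (nat \<times> real \<Rightarrow> real) \<Rightarrow> nat \<times> real \<Rightarrow> real" where
  "ord g l m \<psi> p =
     (\<Sum>(i, t) \<in> {(i, t). 1 \<le> i \<and> i \<le> g \<and> 0 \<le> t \<and> t < circ l m i \<and> loc g l i t = p}.
        lslope g l m \<psi> i t - rslope g l m \<psi> i t)"

definition lin_equiv :: "nat \<Rightarrow> (nat \<Rightarrow> real) \<Rightarrow> (nat \<Rightarrow> real) \<Rightarrow> divisor \<Rightarrow> divisor \<Rightarrow> bool" where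
  "lin_equiv g l m D D' \<longleftrightarrow>
     (\<exists>\<psi>. is_PL g l m \<psi> \<and> (\<forall>p\<in>Pts g l m. real_of_int (D p - D' p) = ord g l m \<psi> p))"

definition rank_ge :: "nat \<Rightarrow> (nat \<Rightarrow> real) \<Rightarrow> (nat \<Rightarrow> real) \<Rightarrow> divisor \<Rightarrow> nat \<Rightarrow> bool" where
  "rank_ge g l m D r \<longleftrightarrow>
     (\<forall>F. is_divisor g l m F \<and> effective F \<and> deg F = int r \<longrightarrow>
        (\<exists>E. is_divisor g l m E \<and> effective E \<and> lin_equiv g l m (\<lambda>p. D p - F p) E))"

definition rank :: "nat \<Rightarrow> (nat \<Rightarrow> real) \<Rightarrow> (nat \<Rightarrow> real) \<Rightarrow> divisor \<Rightarrow> int" where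
  "rank g l m D = (if rank_ge g l m D 0 then int (GREATEST r. rank_ge g l m D r) else -1)"

definition canonical :: "nat \<Rightarrow> (nat \<Rightarrow> real) \<Rightarrow> divisor" where
  "canonical g l p = (if \<exists>i\<in>{1..<g}. p = vtx g l i then 2 else 0)"

end

theory Submission
  imports Defs
begin

text \<open>
  The proof follows the lingering lattice path method.

  First, principal divisors are balanced: on each loop the slope jumps of a piecewise linear
  function sum to zero and have first moment in \<open>\<int> circ_j\<close>. Hence linear equivalence preserves
  the degree and the Abel--Jacobi coordinates \<open>abel l j X\<close> modulo \<open>circ_j\<close>. For an effective divisor
  \<open>E\<close> and a loop \<open>j\<close> without chips, the \<open>j\<close>-th coordinate is \<open>l_j\<close> times the number of chips on
  later loops; genericity makes small multiples of \<open>l_j\<close> incongruent.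

  A lingering path reads these coordinates loop by loop from the right and increases only when
  forced; it stays below the chip count of any effective divisor with the given coordinates.
  For \<open>D\<close> with \<open>r(D) \<ge> 1\<close>, removing generic points shows that an envelope of its path ends below
  \<open>deg D\<close>, while for \<open>E \<sim> K - 2D\<close> the path of the reflected coordinates ends below
  \<open>deg E = 2g - 2 - 2 deg D\<close>. An invariant relating the two paths, maintained by genericity,
  makes these bounds incompatible.
\<close>

section \<open>Piecewise affine functions on a circle\<close>

lemma affine_has_derivative_at_right:
  fixes f :: "real \<Rightarrow> real"
  assumes "a < b" and "\<forall>x\<in>{a..b}. f x = c + s * x"
  shows "(f has_real_derivative s) (at_right a)"
proof -
  have "((\<lambda>x. c + s * x) has_real_derivative s) (at a within {a..b})"
    by (auto intro!: derivative_eq_intros)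
  hence "(f has_real_derivative s) (at a within {a..b})"
    by (rule has_field_derivative_transform_within[where d = 1]) (use assms in auto)
  thus ?thesis using at_within_Icc_at_right[OF assms(1)] by simp
qed

lemma affine_has_derivative_at_left:
  fixes f :: "real \<Rightarrow> real"
  assumes "a < b" and "\<forall>x\<in>{a..b}. f x = c + s * x"
  shows "(f has_real_derivative s) (at_left b)"
proof -
  have "((\<lambda>x. c + s * x) has_real_derivative s) (at b within {a..b})"
    by (auto intro!: derivative_eq_intros)
  hence "(f has_real_derivative s) (at b within {a..b})"
    by (rule has_field_derivative_transform_within[where d = 1]) (use assms in auto)
  thus ?thesis using at_within_Icc_at_left[OF assms(1)] by simp
qed

lemma the_derivative_eqI:
  fixes f :: "real \<Rightarrow> real"
  assumes "(f has_real_derivative s) (at x within A)" and "at x within A \<noteq> bot"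
  shows "(THE s. (f has_real_derivative s) (at x within A)) = s"
  using assms by (auto intro!: the_equality dest: has_field_derivative_unique)

definition circle_jump :: "(real \<Rightarrow> real) \<Rightarrow> real \<Rightarrow> real \<Rightarrow> real" where
  "circle_jump f n t =
     (THE s. (f has_real_derivative s) (at_left (if t = 0 then n else t)))
     - (THE s. (f has_real_derivative s) (at_right t))"

definition balanced_jumps :: "(real \<Rightarrow> real) \<Rightarrow> real \<Rightarrow> real set \<Rightarrow> bool" where
  "balanced_jumps f n B \<longleftrightarrow> finite B \<and> B \<subseteq> {0..<n}
     \<and> (\<forall>t. 0 \<le> t \<and> t < n \<and> t \<notin> B \<longrightarrow> circle_jump f n t = 0)
     \<and> (\<Sum>t\<in>B. circle_jump f n t) = 0
     \<and> (\<exists>z::int. (\<Sum>t\<in>B. circle_jump f n t * t) = of_int z * n)"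

locale circle_pl =
  fixes f :: "real \<Rightarrow> real" and n :: real and N :: nat
    and x :: "nat \<Rightarrow> real" and C :: "nat \<Rightarrow> real" and S :: "nat \<Rightarrow> int"
  assumes pieces: "0 < N"
    and start: "x 0 = 0" and stop: "x N = n"
    and increasing: "\<And>i j. i < j \<Longrightarrow> j \<le> N \<Longrightarrow> x i < x j"
    and affine: "\<And>j y. j < N \<Longrightarrow> x j \<le> y \<Longrightarrow> y \<le> x (Suc j) \<Longrightarrow> f y = C j + of_int (S j) * y"
    and periodic: "f n = f 0"
begin

lemma slope_right: "j < N \<Longrightarrow> x j \<le> t \<Longrightarrow> t < x (Suc j) \<Longrightarrow>
    (THE s. (f has_real_derivative s) (at_right t)) = S j"
  by (rule the_derivative_eqI, rule affine_has_derivative_at_right[of t "x (Suc j)" _ "C j"])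
     (auto intro: affine)

lemma slope_left: "j < N \<Longrightarrow> x j < t \<Longrightarrow> t \<le> x (Suc j) \<Longrightarrow>
    (THE s. (f has_real_derivative s) (at_left t)) = S j"
  by (rule the_derivative_eqI, rule affine_has_derivative_at_left[of "x j" t _ "C j"])
     (auto intro: affine)

lemma piece_containing:
  assumes "0 \<le> t" "t < n"
  obtains j where "j < N" "x j \<le> t" "t < x (Suc j)"
proof -
  define A where "A = {j. j \<le> N \<and> x j \<le> t}"
  define J where "J = Max A"
  have fin: "finite A" and "0 \<in> A" unfolding A_def using start assms by auto
  hence mem: "J \<in> A" and max: "\<And>j. j \<in> A \<Longrightarrow> j \<le> J"
    unfolding J_def by (auto intro: Max_in Max_ge)
  hence "J < N" using stop assms unfolding A_def by (cases "J = N") auto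
  moreover have "t < x (Suc J)" using max[of "Suc J"] \<open>J < N\<close> unfolding A_def by force
  ultimately show thesis using mem that unfolding A_def by auto
qed

lemma jump_off_breakpoints:
  assumes "0 \<le> t" "t < n" "t \<notin> x ` {..<N}"
  shows "circle_jump f n t = 0"
proof -
  obtain j where j: "j < N" "x j \<le> t" "t < x (Suc j)" using piece_containing assms(1,2) .
  hence "x j < t" using assms(3) by (cases "x j = t") auto
  moreover have "t \<noteq> 0" using \<open>x j < t\<close> start increasing[of 0 j] j(1) by (cases j) auto
  ultimately show ?thesis unfolding circle_jump_def using j slope_left slope_right by simp
qed

lemma jump_at_breakpoint:
  assumes "j < N"
  shows "circle_jump f n (x j) = of_int (S (if j = 0 then N - 1 else j - 1)) - of_int (S j)"
proof (cases "j = 0")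
  case True
  have "x (N - 1) < n" using increasing[of "N - 1" N] stop pieces by simp
  thus ?thesis using True start pieces slope_right[of 0 0] slope_left[of "N - 1" n]
    increasing[of 0 1] stop unfolding circle_jump_def by simp
next
  case False
  have "x j \<noteq> 0" using increasing[of 0 j] start assms False by simp
  thus ?thesis using False assms slope_right[of j "x j"] slope_left[of "j - 1" "x j"]
    increasing[of j "Suc j"] increasing[of "j - 1" j] unfolding circle_jump_def by simp
qed

lemma sum_jumps: "(\<Sum>j<N. circle_jump f n (x j)) = 0"
proof -
  obtain M where M: "N = Suc M" using pieces by (cases N) auto
  have "(\<Sum>j<N. circle_jump f n (x j)) = (\<Sum>j<Suc M. of_int (S (if j = 0 then M else j - 1)))
      - (\<Sum>j<Suc M. real_of_int (S j))"
    unfolding M by (simp add: jump_at_breakpoint[unfolded M] sum_subtractf cong: if_cong)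
  also have "(\<Sum>j<Suc M. real_of_int (S (if j = 0 then M else j - 1))) = (\<Sum>j<Suc M. real_of_int (S j))"
    by (subst sum.lessThan_Suc_shift) simp
  finally show ?thesis by simp
qed

text \<open>The first moment of the jumps is an integer multiple of the circumference: it equals
  the total change \<open>f n - f 0 = 0\<close> of \<open>f\<close> minus the slope of the last piece times \<open>n\<close>.\<close>

lemma moment_jumps: "(\<Sum>j<N. circle_jump f n (x j) * x j) = - of_int (S (N - 1)) * n"
proof -
  obtain M where M: "N = Suc M" using pieces by (cases N) auto
  have rise: "of_int (S j) * (x (Suc j) - x j) = f (x (Suc j)) - f (x j)" if "j < N" for j
    using affine[of j "x j"] affine[of j "x (Suc j)"] increasing[of j "Suc j"] that
    by (simp add: algebra_simps)
  have "(\<Sum>j<N. circle_jump f n (x j) * x j)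
      = (\<Sum>j<Suc M. of_int (S (if j = 0 then M else j - 1)) * x j) - (\<Sum>j<N. of_int (S j) * x j)"
    unfolding M by (simp add: jump_at_breakpoint[unfolded M] sum_subtractf left_diff_distrib cong: if_cong)
  also have "(\<Sum>j<Suc M. of_int (S (if j = 0 then M else j - 1)) * x j)
      = (\<Sum>j<N. of_int (S j) * x (Suc j)) - of_int (S M) * n"
    using start stop unfolding M by (subst sum.lessThan_Suc_shift) simp
  also have "\<dots> - (\<Sum>j<N. of_int (S j) * x j)
      = (\<Sum>j<N. of_int (S j) * (x (Suc j) - x j)) - of_int (S M) * n"
    by (simp add: sum_subtractf right_diff_distrib)
  also have "(\<Sum>j<N. of_int (S j) * (x (Suc j) - x j)) = (\<Sum>j<N. f (x (Suc j)) - f (x j))"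
    by (rule sum.cong) (simp_all add: rise)
  also have "(\<Sum>j<N. f (x (Suc j)) - f (x j)) = 0"
    using sum_lessThan_telescope[of "\<lambda>j. f (x j)" N] start stop periodic by simp
  finally show ?thesis using M by simp
qed

lemma balanced: "balanced_jumps f n (x ` {..<N})"
  unfolding balanced_jumps_def
proof (intro conjI exI)
  have inj: "inj_on x {..<N}"
  proof (rule inj_onI)
    fix i j assume "i \<in> {..<N}" "j \<in> {..<N}" "x i = x j"
    thus "i = j" using increasing[of i j] increasing[of j i] by (cases i j rule: linorder_cases) auto
  qed
  show "finite (x ` {..<N})" by simp
  show "x ` {..<N} \<subseteq> {0..<n}"
  proof
    fix t assume "t \<in> x ` {..<N}"
    then obtain j where j: "j < N" "t = x j" by auto
    have "x 0 \<le> x j" using increasing[of 0 j] j(1) by (cases j) auto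
    thus "t \<in> {0..<n}" using increasing[of j N] j start stop by simp
  qed
  show "\<forall>t. 0 \<le> t \<and> t < n \<and> t \<notin> x ` {..<N} \<longrightarrow> circle_jump f n t = 0"
    using jump_off_breakpoints by blast
  show "(\<Sum>t\<in>x ` {..<N}. circle_jump f n t) = 0"
    using sum_jumps by (simp add: sum.reindex[OF inj])
  show "(\<Sum>t\<in>x ` {..<N}. circle_jump f n t * t) = of_int (- S (N - 1)) * n"
    using moment_jumps by (simp add: sum.reindex[OF inj])
qed

end

section \<open>Balancing of principal divisors on the chain of loops\<close>

definition jump :: "nat \<Rightarrow> (nat \<Rightarrow> real) \<Rightarrow> (nat \<Rightarrow> real) \<Rightarrow> (nat \<times> real \<Rightarrow> real) \<Rightarrow> nat \<Rightarrow> real \<Rightarrow> real"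
  where "jump g l m \<psi> i t = circle_jump (\<lambda>x. \<psi> (pos g l m i x)) (circ l m i) t"

definition incidences :: "nat \<Rightarrow> (nat \<Rightarrow> real) \<Rightarrow> (nat \<Rightarrow> real) \<Rightarrow> nat \<times> real \<Rightarrow> (nat \<times> real) set"
  where "incidences g l m p = {(i, t). 1 \<le> i \<and> i \<le> g \<and> 0 \<le> t \<and> t < circ l m i \<and> loc g l i t = p}"

lemma ord_eq_sum_jumps: "ord g l m \<psi> p = (\<Sum>(i, t)\<in>incidences g l m p. jump g l m \<psi> i t)"
  unfolding ord_def incidences_def jump_def circle_jump_def lslope_def rslope_def ..

lemma incidence_in_Pts: "x \<in> incidences g l m p \<Longrightarrow> p \<in> Pts g l m"
  unfolding incidences_def Pts_def by blast

text \<open>A point has at most two incidences: itself, and the end of the top edge of the previous loop.\<close>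

lemma finite_incidences: "finite (incidences g l m p)"
proof (rule finite_subset)
  show "incidences g l m p \<subseteq> {(fst p, snd p), (fst p - 1, l (fst p - 1))}"
    unfolding incidences_def loc_def by (auto split: if_splits)
qed simp

lemma PL_loop_balanced:
  assumes PL: "is_PL g l m \<psi>" and i: "i \<in> {1..g}" and n: "0 < circ l m i"
  shows "\<exists>B. balanced_jumps (\<lambda>x. \<psi> (pos g l m i x)) (circ l m i) B"
proof -
  let ?f = "\<lambda>x. \<psi> (pos g l m i x)"
  obtain xs where xs: "sorted_wrt (<) xs" "xs \<noteq> []" "hd xs = 0" "last xs = circ l m i"
    and pieces: "\<forall>j. Suc j < length xs \<longrightarrow>
       (\<exists>(s::int) (c::real). \<forall>y\<in>{xs ! j .. xs ! Suc j}. ?f y = c + of_int s * y)"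
    using PL i unfolding is_PL_def by blast
  obtain S C where SC: "\<And>j. Suc j < length xs \<Longrightarrow> \<forall>y\<in>{xs ! j .. xs ! Suc j}. ?f y = C j + of_int (S j) * y"
    using pieces by metis
  have two: "1 < length xs"
  proof (rule ccontr)
    assume "\<not> 1 < length xs"
    then obtain a where "xs = [a]" using xs(2) by (cases xs) auto
    thus False using xs(3,4) n by simp
  qed
  have "circle_pl ?f (circ l m i) (length xs - 1) (\<lambda>j. xs ! j) C S"
  proof
    show "0 < length xs - 1" using two by simp
    show "xs ! 0 = 0" using xs(2,3) by (simp add: hd_conv_nth)
    show "xs ! (length xs - 1) = circ l m i" using xs(2,4) by (simp add: last_conv_nth)
    show "xs ! a < xs ! b" if "a < b" "b \<le> length xs - 1" for a b
      using xs(1) that two by (simp add: sorted_wrt_iff_nth_less)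
    show "?f y = C j + of_int (S j) * y" if "j < length xs - 1" "xs ! j \<le> y" "y \<le> xs ! Suc j" for j y
      using SC[of j] that by simp
    show "?f (circ l m i) = ?f 0" using n unfolding pos_def by simp
  qed
  thus ?thesis using circle_pl.balanced by blast
qed

lemma PL_balanced_loops:
  assumes PL: "is_PL g l m \<psi>" and pos: "\<forall>i\<in>{1..g}. 0 < l i \<and> 0 < m i"
  obtains B where "\<And>i. i \<in> {1..g} \<Longrightarrow> finite (B i)" "\<And>i. i \<in> {1..g} \<Longrightarrow> B i \<subseteq> {0..<circ l m i}"
    "\<And>i t. i \<in> {1..g} \<Longrightarrow> 0 \<le> t \<Longrightarrow> t < circ l m i \<Longrightarrow> t \<notin> B i \<Longrightarrow> jump g l m \<psi> i t = 0"
    "\<And>i. i \<in> {1..g} \<Longrightarrow> (\<Sum>t\<in>B i. jump g l m \<psi> i t) = 0"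
    "\<And>i. i \<in> {1..g} \<Longrightarrow> \<exists>z::int. (\<Sum>t\<in>B i. jump g l m \<psi> i t * t) = of_int z * circ l m i"
proof -
  have "\<forall>i\<in>{1..g}. \<exists>B. balanced_jumps (\<lambda>x. \<psi> (pos g l m i x)) (circ l m i) B"
  proof
    fix i assume i: "i \<in> {1..g}"
    have "0 < circ l m i" using pos i unfolding circ_def by (simp add: add_pos_pos)
    thus "\<exists>B. balanced_jumps (\<lambda>x. \<psi> (pos g l m i x)) (circ l m i) B" by (rule PL_loop_balanced[OF PL i])
  qed
  then obtain B where B: "\<forall>i\<in>{1..g}. balanced_jumps (\<lambda>x. \<psi> (pos g l m i x)) (circ l m i) (B i)"
    by (metis bchoice)
  show thesis
    by (rule that[of B]; use B in \<open>simp add: balanced_jumps_def jump_def[symmetric]\<close>)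
qed

text \<open>Regrouping a weighted sum of orders by loops: the order at \<open>p\<close> collects the jumps at
  the incidences of \<open>p\<close>, and every loop position is an incidence of exactly one point.\<close>

lemma sum_ord_by_loops:
  assumes fin: "finite S" and SP: "S \<subseteq> Pts g l m"
    and ord_zero: "\<forall>p\<in>Pts g l m - S. ord g l m \<psi> p = 0"
    and B: "\<And>i. i \<in> {1..g} \<Longrightarrow> finite (B i) \<and> B i \<subseteq> {0..<circ l m i}"
    and jump_zero: "\<And>i t. i \<in> {1..g} \<Longrightarrow> 0 \<le> t \<Longrightarrow> t < circ l m i \<Longrightarrow> t \<notin> B i \<Longrightarrow>
       jump g l m \<psi> i t = 0"
  shows "(\<Sum>p\<in>S. ord g l m \<psi> p * \<phi> p) = (\<Sum>i\<in>{1..g}. \<Sum>t\<in>B i. jump g l m \<psi> i t * \<phi> (loc g l i t))"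
proof -
  define L where "L = (\<lambda>x. loc g l (fst x) (snd x))"
  define J where "J = (\<lambda>x. jump g l m \<psi> (fst x) (snd x) * \<phi> (L x))"
  define T where "T = S \<union> L ` Sigma {1..g} B"
  have "finite (Sigma {1..g} B)" using B by (intro finite_SigmaI) auto
  hence finT: "finite T" unfolding T_def using fin by simp
  have inc_L: "x \<in> incidences g l m p \<Longrightarrow> L x = p" for x p
    unfolding incidences_def L_def by auto
  have L_inc: "x \<in> incidences g l m (L x)" if "x \<in> Sigma {1..g} B" for x
    using that B unfolding incidences_def L_def by fastforce
  have TP: "T \<subseteq> Pts g l m" unfolding T_def using SP L_inc incidence_in_Pts by blast
  have "(\<Sum>p\<in>S. ord g l m \<psi> p * \<phi> p) = (\<Sum>p\<in>T. ord g l m \<psi> p * \<phi> p)"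
    by (rule sum.mono_neutral_left) (use finT TP ord_zero in \<open>auto simp: T_def\<close>)
  also have "\<dots> = (\<Sum>p\<in>T. \<Sum>x\<in>incidences g l m p. J x)"
    unfolding ord_eq_sum_jumps J_def
    by (rule sum.cong) (auto simp: sum_distrib_right case_prod_beta inc_L intro!: sum.cong)
  also have "\<dots> = (\<Sum>x\<in>(\<Union>p\<in>T. incidences g l m p). J x)"
    by (rule sum.UNION_disjoint[symmetric]) (use finT finite_incidences in \<open>auto simp: incidences_def\<close>)
  also have "\<dots> = (\<Sum>x\<in>Sigma {1..g} B. J x)"
  proof (rule sum.mono_neutral_right)
    show "finite (\<Union>p\<in>T. incidences g l m p)" using finT finite_incidences by simp
    show "Sigma {1..g} B \<subseteq> (\<Union>p\<in>T. incidences g l m p)"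
      using L_inc unfolding T_def by blast
    show "\<forall>x\<in>(\<Union>p\<in>T. incidences g l m p) - Sigma {1..g} B. J x = 0"
      using jump_zero unfolding J_def incidences_def by fastforce
  qed
  also have "\<dots> = (\<Sum>i\<in>{1..g}. \<Sum>t\<in>B i. J (i, t))"
    using sum.Sigma[of "{1..g}" B "\<lambda>i t. J (i, t)"] B by simp
  finally show ?thesis unfolding J_def L_def by simp
qed

text \<open>The \<open>j\<close>-th Abel--Jacobi coordinate of a point: its distance from \<open>v_(j-1)\<close> along the top
  edge of loop \<open>j\<close>, measured through the chain (\<open>0\<close> before loop \<open>j\<close>, \<open>l j\<close> after it).\<close>

definition abel_coord :: "(nat \<Rightarrow> real) \<Rightarrow> nat \<Rightarrow> nat \<times> real \<Rightarrow> real" where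
  "abel_coord l j p = (if fst p < j then 0 else if fst p = j then snd p else l j)"

lemma abel_coord_loc: "abel_coord l j (loc g l i t) = (if i < j then 0 else if i = j then t else l j)"
proof (cases "i < g \<and> t = l i")
  case True
  hence "loc g l i t = (Suc i, 0)" unfolding loc_def by simp
  thus ?thesis unfolding abel_coord_def using True by (cases "i < j"; cases "Suc i < j") auto
next
  case False
  hence loc_eq: "loc g l i t = (i, t)" unfolding loc_def by simp
  show ?thesis unfolding loc_eq abel_coord_def by simp
qed

lemma principal_balanced:
  assumes PL: "is_PL g l m \<psi>" and pos: "\<forall>i\<in>{1..g}. 0 < l i \<and> 0 < m i"
    and fin: "finite S" and SP: "S \<subseteq> Pts g l m" and ord_zero: "\<forall>p\<in>Pts g l m - S. ord g l m \<psi> p = 0"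
  shows "(\<Sum>p\<in>S. ord g l m \<psi> p) = 0"
    and "j \<in> {1..g} \<Longrightarrow> \<exists>z::int. (\<Sum>p\<in>S. ord g l m \<psi> p * abel_coord l j p) = of_int z * circ l m j"
proof -
  obtain B where B: "\<And>i. i \<in> {1..g} \<Longrightarrow> finite (B i)" "\<And>i. i \<in> {1..g} \<Longrightarrow> B i \<subseteq> {0..<circ l m i}"
    "\<And>i t. i \<in> {1..g} \<Longrightarrow> 0 \<le> t \<Longrightarrow> t < circ l m i \<Longrightarrow> t \<notin> B i \<Longrightarrow> jump g l m \<psi> i t = 0"
    "\<And>i. i \<in> {1..g} \<Longrightarrow> (\<Sum>t\<in>B i. jump g l m \<psi> i t) = 0"
    "\<And>i. i \<in> {1..g} \<Longrightarrow> \<exists>z::int. (\<Sum>t\<in>B i. jump g l m \<psi> i t * t) = of_int z * circ l m i"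
    by (rule PL_balanced_loops[OF PL pos]) blast
  have regroup: "(\<Sum>p\<in>S. ord g l m \<psi> p * \<phi> p)
      = (\<Sum>i\<in>{1..g}. \<Sum>t\<in>B i. jump g l m \<psi> i t * \<phi> (loc g l i t))" for \<phi>
    by (rule sum_ord_by_loops[OF fin SP ord_zero]) (use B in blast)+
  have "(\<Sum>p\<in>S. ord g l m \<psi> p) = (\<Sum>i\<in>{1..g}. \<Sum>t\<in>B i. jump g l m \<psi> i t)"
    using regroup[of "\<lambda>_. 1"] by simp
  also have "\<dots> = 0" using B(4) by simp
  finally show "(\<Sum>p\<in>S. ord g l m \<psi> p) = 0" .
  assume j: "j \<in> {1..g}"
  obtain z :: int where z: "(\<Sum>t\<in>B j. jump g l m \<psi> j t * t) = of_int z * circ l m j"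
    using B(5)[OF j] by blast
  text \<open>Loops before \<open>j\<close> contribute nothing, loop \<open>j\<close> contributes its moment, and every
    later loop contributes \<open>l j\<close> times its vanishing total jump.\<close>
  have loop_term: "(\<Sum>t\<in>B i. jump g l m \<psi> i t * abel_coord l j (loc g l i t))
      = (if i = j then of_int z * circ l m j else 0)" if i: "i \<in> {1..g}" for i
  proof (cases i j rule: linorder_cases)
    case greater
    have "(\<Sum>t\<in>B i. jump g l m \<psi> i t * l j) = (\<Sum>t\<in>B i. jump g l m \<psi> i t) * l j"
      by (simp add: sum_distrib_right)
    thus ?thesis using greater B(4)[OF i] by (simp add: abel_coord_loc)
  qed (use z in \<open>simp_all add: abel_coord_loc\<close>)
  have "(\<Sum>p\<in>S. ord g l m \<psi> p * abel_coord l j p)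
      = (\<Sum>i\<in>{1..g}. \<Sum>t\<in>B i. jump g l m \<psi> i t * abel_coord l j (loc g l i t))"
    by (rule regroup)
  also have "\<dots> = of_int z * circ l m j" using j by (simp add: loop_term)
  finally show "\<exists>z::int. (\<Sum>p\<in>S. ord g l m \<psi> p * abel_coord l j p) = of_int z * circ l m j" by blast
qed

section \<open>Abel--Jacobi invariants of divisors\<close>

definition supp :: "divisor \<Rightarrow> (nat \<times> real) set" where
  "supp X = {p. X p \<noteq> 0}"

definition abel :: "(nat \<Rightarrow> real) \<Rightarrow> nat \<Rightarrow> divisor \<Rightarrow> real" where
  "abel l j X = (\<Sum>p\<in>supp X. real_of_int (X p) * abel_coord l j p)"

definition loop_cong :: "(nat \<Rightarrow> real) \<Rightarrow> (nat \<Rightarrow> real) \<Rightarrow> nat \<Rightarrow> real \<Rightarrow> real \<Rightarrow> bool" where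
  "loop_cong l m j x y \<longleftrightarrow> (\<exists>z::int. x - y = of_int z * circ l m j)"

lemma loop_cong_sym: "loop_cong l m j x y \<Longrightarrow> loop_cong l m j y x"
  unfolding loop_cong_def by (metis minus_diff_eq mult_minus_left of_int_minus)

lemma loop_cong_trans: "loop_cong l m j x y \<Longrightarrow> loop_cong l m j y w \<Longrightarrow> loop_cong l m j x w"
  unfolding loop_cong_def by (metis (no_types) diff_add_cancel add_diff_eq distrib_right of_int_add
    add_diff_cancel_left')

lemma loop_cong_double: "loop_cong l m j x y \<Longrightarrow> loop_cong l m j (2 * x) (2 * y)"
  unfolding loop_cong_def by (metis (no_types) mult.assoc of_int_mult of_int_numeral right_diff_distrib)

lemma loop_cong_shift: "loop_cong l m j (x - c) y \<longleftrightarrow> loop_cong l m j x (y + c)"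
  unfolding loop_cong_def by (simp add: algebra_simps)

lemma loop_cong_reflect: "loop_cong l m j (a - x) y \<longleftrightarrow> loop_cong l m j x (a - y)"
  unfolding loop_cong_def by (metis (no_types) minus_diff_eq mult_minus_left of_int_minus
    diff_diff_eq2 add.commute diff_diff_eq)

lemma fin_supp: "is_divisor g l m X \<Longrightarrow> finite (supp X)"
  unfolding is_divisor_def supp_def by simp

lemma divisor_lincomb:
  assumes "is_divisor g l m X" "is_divisor g l m Y"
  shows "is_divisor g l m (\<lambda>p. a * X p + b * Y p)"
proof -
  have "{p. a * X p + b * Y p \<noteq> 0} \<subseteq> {p. X p \<noteq> 0} \<union> {p. Y p \<noteq> 0}" by auto
  thus ?thesis using assms unfolding is_divisor_def by (meson finite_UnI finite_subset le_sup_iff order_trans)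
qed

lemma sums_over_superset:
  assumes "finite S" "supp X \<subseteq> S"
  shows "deg X = (\<Sum>p\<in>S. X p)" and "abel l j X = (\<Sum>p\<in>S. real_of_int (X p) * abel_coord l j p)"
  unfolding deg_def abel_def
  by (rule sum.mono_neutral_left; use assms in \<open>auto simp: supp_def\<close>)+

lemma linear_combination:
  assumes "finite (supp X)" "finite (supp Y)"
  shows "deg (\<lambda>p. a * X p + b * Y p) = a * deg X + b * deg Y"
    and "abel l j (\<lambda>p. a * X p + b * Y p) = of_int a * abel l j X + of_int b * abel l j Y"
proof -
  let ?S = "supp X \<union> supp Y"
  have fin: "finite ?S" using assms by simp
  have "supp (\<lambda>p. a * X p + b * Y p) \<subseteq> ?S" "supp X \<subseteq> ?S" "supp Y \<subseteq> ?S"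
    unfolding supp_def by auto
  note sums = sums_over_superset[OF fin this(1)] sums_over_superset[OF fin this(2)]
    sums_over_superset[OF fin this(3)]
  show "deg (\<lambda>p. a * X p + b * Y p) = a * deg X + b * deg Y"
    unfolding sums by (simp add: sum.distrib sum_distrib_left)
  show "abel l j (\<lambda>p. a * X p + b * Y p) = of_int a * abel l j X + of_int b * abel l j Y"
    unfolding sums by (simp add: sum.distrib sum_distrib_left algebra_simps)
qed

lemma lin_equiv_invariants:
  assumes pos: "\<forall>i\<in>{1..g}. 0 < l i \<and> 0 < m i"
    and X: "is_divisor g l m X" and Y: "is_divisor g l m Y" and equiv: "lin_equiv g l m X Y"
  shows "deg X = deg Y" and "j \<in> {1..g} \<Longrightarrow> loop_cong l m j (abel l j X) (abel l j Y)"
proof -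
  obtain \<psi> where PL: "is_PL g l m \<psi>"
    and ord: "\<forall>p\<in>Pts g l m. real_of_int (X p - Y p) = ord g l m \<psi> p"
    using equiv unfolding lin_equiv_def by blast
  let ?S = "supp X \<union> supp Y"
  have fin: "finite ?S" and SP: "?S \<subseteq> Pts g l m" using X Y unfolding is_divisor_def supp_def by auto
  have "\<forall>p\<in>Pts g l m - ?S. ord g l m \<psi> p = 0" using ord unfolding supp_def by force
  note balanced = principal_balanced[OF PL pos fin SP this]
  have "supp X \<subseteq> ?S" "supp Y \<subseteq> ?S" by auto
  note sums = sums_over_superset[OF fin this(1)] sums_over_superset[OF fin this(2)]
  have "real_of_int (deg X - deg Y) = (\<Sum>p\<in>?S. ord g l m \<psi> p)"
    unfolding sums using ord SP by (auto simp: sum_subtractf[symmetric] intro!: sum.cong)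
  thus "deg X = deg Y" using balanced(1) by simp
  assume j: "j \<in> {1..g}"
  have "abel l j X - abel l j Y = (\<Sum>p\<in>?S. ord g l m \<psi> p * abel_coord l j p)"
    unfolding sums using ord SP by (auto simp: sum_subtractf[symmetric] left_diff_distrib[symmetric]
      intro!: sum.cong)
  thus "loop_cong l m j (abel l j X) (abel l j Y)" using balanced(2)[OF j] unfolding loop_cong_def by simp
qed

lemma lin_equiv_combination:
  assumes pos: "\<forall>i\<in>{1..g}. 0 < l i \<and> 0 < m i"
    and X: "is_divisor g l m X" and Y: "is_divisor g l m Y" and E: "is_divisor g l m E"
    and equiv: "lin_equiv g l m (\<lambda>p. a * X p + b * Y p) E"
  shows "deg E = a * deg X + b * deg Y"
    and "j \<in> {1..g} \<Longrightarrow> loop_cong l m j (of_int a * abel l j X + of_int b * abel l j Y) (abel l j E)"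
  using lin_equiv_invariants[OF pos divisor_lincomb[OF X Y] E equiv]
    linear_combination[OF fin_supp[OF X] fin_supp[OF Y]] by simp_all

section \<open>Chips of an effective divisor on and beyond a loop\<close>

text \<open>The number of chips of \<open>E\<close> on the loops after loop \<open>j\<close>, and on loop \<open>j\<close> itself (a vertex
  \<open>v_j\<close> with \<open>1 \<le> j < g\<close> counts as a point of loop \<open>j + 1\<close>).\<close>

definition chips_after :: "divisor \<Rightarrow> nat \<Rightarrow> int" where
  "chips_after E j = (\<Sum>p\<in>supp E \<inter> {p. j < fst p}. E p)"

definition chips_on :: "divisor \<Rightarrow> nat \<Rightarrow> int" where
  "chips_on E j = (\<Sum>p\<in>supp E \<inter> {p. fst p = j}. E p)"

lemma loop_index_Pts: "p \<in> Pts g l m \<Longrightarrow> 1 \<le> fst p \<and> fst p \<le> g"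
  unfolding Pts_def loc_def by auto

context
  fixes g l m E
  assumes divisor: "is_divisor g l m E" and eff: "effective E"
begin

lemma chips_nonneg: "0 \<le> E p"
  using eff unfolding effective_def by blast

lemma chips_after_0: "chips_after E 0 = deg E"
proof -
  have "supp E \<inter> {p. 0 < fst p} = supp E"
    using divisor loop_index_Pts unfolding is_divisor_def supp_def by fastforce
  thus ?thesis unfolding chips_after_def deg_def supp_def by simp
qed

lemma chips_after_step: "1 \<le> j \<Longrightarrow> chips_after E (j - 1) = chips_after E j + chips_on E j"
proof -
  assume "1 \<le> j"
  hence "supp E \<inter> {p. j - 1 < fst p} = (supp E \<inter> {p. j < fst p}) \<union> (supp E \<inter> {p. fst p = j})"
    by auto
  moreover have "(supp E \<inter> {p. j < fst p}) \<inter> (supp E \<inter> {p. fst p = j}) = {}" by auto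
  ultimately show ?thesis unfolding chips_after_def chips_on_def
    using fin_supp[OF divisor] by (simp add: sum.union_disjoint)
qed

lemma chips_after_nonneg: "0 \<le> chips_after E j"
  unfolding chips_after_def by (rule sum_nonneg) (simp add: chips_nonneg)

lemma chips_on_nonneg: "0 \<le> chips_on E j"
  unfolding chips_on_def by (rule sum_nonneg) (simp add: chips_nonneg)

lemma chips_after_le_deg: "chips_after E j \<le> deg E"
proof -
  have "chips_after E j \<le> chips_after E 0" unfolding chips_after_def
    by (rule sum_mono2) (use fin_supp[OF divisor] chips_nonneg in auto)
  thus ?thesis using chips_after_0 by simp
qed

lemma abel_no_chips_on:
  assumes "chips_on E j = 0"
  shows "abel l j E = l j * of_int (chips_after E j)"
proof -
  have "E p = 0" if "p \<in> supp E \<inter> {p. fst p = j}" for p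
    using assms that fin_supp[OF divisor] chips_nonneg unfolding chips_on_def
    by (subst (asm) sum_nonneg_eq_0_iff) auto
  hence off_loop: "fst p \<noteq> j" if "p \<in> supp E" for p using that unfolding supp_def by blast
  have "abel l j E = (\<Sum>p\<in>supp E. if j < fst p then real_of_int (E p) * l j else 0)"
    unfolding abel_def by (rule sum.cong) (auto simp: abel_coord_def dest: off_loop)
  also have "\<dots> = (\<Sum>p\<in>supp E \<inter> {p. j < fst p}. real_of_int (E p) * l j)"
    using fin_supp[OF divisor] by (simp add: sum.inter_restrict)
  also have "\<dots> = l j * of_int (chips_after E j)"
    unfolding chips_after_def by (simp add: sum_distrib_left mult.commute)
  finally show ?thesis .
qed

end

section \<open>Genericity\<close>

lemma generic_positive: "generic_chain g l m \<Longrightarrow> \<forall>i\<in>{1..g}. 0 < l i \<and> 0 < m i"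
  unfolding generic_chain_def by auto

text \<open>On a generic loop, no multiple \<open>k \<cdot> l_i\<close> with \<open>0 < k \<le> 2g - 2\<close> is a multiple of the
  circumference \<open>l_i + m_i\<close>: otherwise \<open>l_i / m_i = z / (k - z)\<close> for some \<open>0 < z < k\<close>.\<close>

lemma generic_no_torsion:
  assumes gen: "generic_chain g l m" and i: "i \<in> {1..g}"
    and k: "0 < k" "k \<le> 2 * int g - 2" and z: "real_of_int k * l i = of_int z * (l i + m i)"
  shows False
proof -
  have lp: "0 < l i" and mp: "0 < m i" using generic_positive[OF gen] i by auto
  have eq: "real_of_int (k - z) * l i = of_int z * m i" using z by (simp add: algebra_simps)
  have "0 < z"
  proof (rule ccontr)
    assume "\<not> 0 < z"
    hence "of_int z * m i \<le> 0" "0 < real_of_int (k - z) * l i" using mp lp k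
      by (simp_all add: mult_nonpos_nonneg)
    thus False using eq by simp
  qed
  moreover have "z < k"
  proof (rule ccontr)
    assume "\<not> z < k"
    hence "real_of_int (k - z) * l i \<le> 0" "0 < of_int z * m i" using lp mp \<open>0 < z\<close>
      by (simp_all add: mult_nonpos_nonneg)
    thus False using eq by simp
  qed
  ultimately have "0 < nat z" "0 < nat (k - z)" "nat z + nat (k - z) \<le> 2 * g - 2"
    using k by linarith+
  hence "l i / m i \<noteq> real (nat z) / real (nat (k - z))"
    using gen i unfolding generic_chain_def by blast
  moreover have "l i / m i = real (nat z) / real (nat (k - z))"
    using eq mp lp \<open>0 < z\<close> \<open>z < k\<close> by (simp add: field_simps)
  ultimately show False by simp
qed

lemma generic_cong_eq:
  assumes gen: "generic_chain g l m" and i: "i \<in> {1..g}"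
    and bound: "\<bar>a - b\<bar> \<le> 2 * int g - 2"
    and cong: "loop_cong l m i (l i * of_int a) (l i * of_int b)"
  shows "a = b"
proof (rule ccontr)
  assume "a \<noteq> b"
  obtain z :: int where z: "l i * of_int a - l i * of_int b = of_int z * circ l m i"
    using cong unfolding loop_cong_def by blast
  show False
  proof (cases "b < a")
    case True
    show False by (rule generic_no_torsion[OF gen i, of "a - b" z])
      (use True bound z in \<open>auto simp: circ_def algebra_simps\<close>)
  next
    case False
    show False by (rule generic_no_torsion[OF gen i, of "b - a" "- z"])
      (use False \<open>a \<noteq> b\<close> bound z in \<open>auto simp: circ_def algebra_simps\<close>)
  qed
qed

section \<open>Lingering lattice paths\<close>

text \<open>A path reads the loops from right to left: at time \<open>h < g\<close> it visits loop \<open>g - h\<close>.\<close>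

definition path_step :: "nat \<Rightarrow> (nat \<Rightarrow> real) \<Rightarrow> (nat \<Rightarrow> real) \<Rightarrow> (nat \<Rightarrow> real) \<Rightarrow> nat \<Rightarrow> int \<Rightarrow> int" where
  "path_step g l m \<eta> h v = v + (if loop_cong l m (g - h) (\<eta> (g - h)) (l (g - h) * of_int v) then 0 else 1)"

fun lingering_path :: "nat \<Rightarrow> (nat \<Rightarrow> real) \<Rightarrow> (nat \<Rightarrow> real) \<Rightarrow> (nat \<Rightarrow> real) \<Rightarrow> int \<Rightarrow> nat \<Rightarrow> nat \<Rightarrow> int" where
  "lingering_path g l m \<eta> v a 0 = v"
| "lingering_path g l m \<eta> v a (Suc j) = path_step g l m \<eta> (a + j) (lingering_path g l m \<eta> v a j)"

lemma path_step_bounds: "v \<le> path_step g l m \<eta> h v" "path_step g l m \<eta> h v \<le> v + 1"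
  unfolding path_step_def by auto

lemma path_step_mono: "v \<le> v' \<Longrightarrow> path_step g l m \<eta> h v \<le> path_step g l m \<eta> h v'"
  unfolding path_step_def by (cases "v = v'") auto

text \<open>Comparison with an effective divisor \<open>E\<close>: if the path may linger on every chip-free loop
  at the value "chips of \<open>E\<close> beyond that loop, plus \<open>\<delta>\<close>", then a path starting below that
  count stays below it, since the count only drops by the chips on the loop just passed.\<close>

lemma path_step_le_chips:
  assumes E: "is_divisor g l m E" "effective E" and h: "h < g"
    and linger: "chips_on E (g - h) = 0 \<Longrightarrow>
       loop_cong l m (g - h) (\<eta> (g - h)) (l (g - h) * of_int (chips_after E (g - h) + \<delta>))"
    and below: "u \<le> chips_after E (g - h) + \<delta>"
  shows "path_step g l m \<eta> h u \<le> chips_after E (g - Suc h) + \<delta>"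
proof -
  have "g - Suc h = g - h - 1" by simp
  hence step: "chips_after E (g - Suc h) = chips_after E (g - h) + chips_on E (g - h)"
    using chips_after_step[OF E, of "g - h"] h by simp
  have up: "path_step g l m \<eta> h u \<le> u + 1" by (rule path_step_bounds(2))
  show ?thesis
  proof (cases "chips_on E (g - h) = 0")
    case True
    show ?thesis
    proof (cases "u = chips_after E (g - h) + \<delta>")
      case True
      hence "path_step g l m \<eta> h u = u" using linger \<open>chips_on E (g - h) = 0\<close>
        unfolding path_step_def by simp
      thus ?thesis using True step \<open>chips_on E (g - h) = 0\<close> by simp
    next
      case False
      thus ?thesis using below up step \<open>chips_on E (g - h) = 0\<close> by simp
    qed
  next
    case False
    hence "1 \<le> chips_on E (g - h)" using chips_on_nonneg[OF E, of "g - h"] by simp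
    thus ?thesis using below up step by simp
  qed
qed

lemma path_le_chips:
  assumes E: "is_divisor g l m E" "effective E" and b: "b \<le> g"
    and linger: "\<And>h. a \<le> h \<Longrightarrow> h < b \<Longrightarrow> chips_on E (g - h) = 0 \<Longrightarrow>
        loop_cong l m (g - h) (\<eta> (g - h)) (l (g - h) * of_int (chips_after E (g - h) + \<delta>))"
    and start: "v \<le> chips_after E (g - a) + \<delta>"
  shows "a + j \<le> b \<Longrightarrow> lingering_path g l m \<eta> v a j \<le> chips_after E (g - (a + j)) + \<delta>"
proof (induction j)
  case (Suc j)
  have "a + j < b" using Suc.prems by simp
  hence "path_step g l m \<eta> (a + j) (lingering_path g l m \<eta> v a j) \<le> chips_after E (g - Suc (a + j)) + \<delta>"
    using Suc.IH b by (intro path_step_le_chips[OF E] linger) simp_all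
  thus ?case by simp
qed (use start in simp)

lemma path_range: "v \<le> lingering_path g l m \<eta> v a j \<and> lingering_path g l m \<eta> v a j \<le> v + int j"
proof (induction j)
  case (Suc j)
  thus ?case using path_step_bounds[where g = g and l = l and m = m and \<eta> = \<eta> and h = "a + j"
      and v = "lingering_path g l m \<eta> v a j"] by simp
qed simp

text \<open>The envelope of the path \<open>c\<close> of \<open>\<xi>\<close> started at \<open>0\<close>: it starts at \<open>1\<close>, follows the lingering
  rule, and is pushed up whenever it would come closer than \<open>2\<close> to \<open>c\<close>. Hence it stays above \<open>c\<close>,
  but below a path restarted two units above \<open>c\<close> (lemma envelope_restart).\<close>

fun envelope :: "nat \<Rightarrow> (nat \<Rightarrow> real) \<Rightarrow> (nat \<Rightarrow> real) \<Rightarrow> (nat \<Rightarrow> real) \<Rightarrow> nat \<Rightarrow> int" where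
  "envelope g l m \<xi> 0 = 1"
| "envelope g l m \<xi> (Suc h) =
     max (path_step g l m \<xi> h (envelope g l m \<xi> h)) (lingering_path g l m \<xi> 0 0 h + 2)"

lemma envelope_mono: "h \<le> h' \<Longrightarrow> envelope g l m \<xi> h \<le> envelope g l m \<xi> h'"
proof (induction h' rule: dec_induct)
  case (step n)
  thus ?case using path_step_bounds(1)[where g = g and l = l and m = m and \<eta> = \<xi> and h = n
      and v = "envelope g l m \<xi> n"] by simp
qed simp

text \<open>The envelope at time \<open>h\<close> is dominated by the path restarted, at the last time \<open>h0\<close> at which
  the lower bound was active, at two units above the original path.\<close>

lemma envelope_restart:
  "1 \<le> h \<Longrightarrow> \<exists>h0<h. envelope g l m \<xi> h
     \<le> lingering_path g l m \<xi> (lingering_path g l m \<xi> 0 0 h0 + 2) (Suc h0) (h - Suc h0)"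
proof (induction h)
  case (Suc h)
  show ?case
  proof (cases "path_step g l m \<xi> h (envelope g l m \<xi> h) \<le> lingering_path g l m \<xi> 0 0 h + 2")
    case True
    thus ?thesis by (intro exI[of _ h]) simp
  next
    case False
    hence "1 \<le> h" using path_step_bounds(2)[where v = 1 and h = 0] by (cases h) auto
    then obtain h0 where h0: "h0 < h"
      "envelope g l m \<xi> h
         \<le> lingering_path g l m \<xi> (lingering_path g l m \<xi> 0 0 h0 + 2) (Suc h0) (h - Suc h0)"
      using Suc.IH by blast
    have "Suc h - Suc h0 = Suc (h - Suc h0)" and "Suc h0 + (h - Suc h0) = h" using h0(1) by auto
    hence "path_step g l m \<xi> h
          (lingering_path g l m \<xi> (lingering_path g l m \<xi> 0 0 h0 + 2) (Suc h0) (h - Suc h0))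
        = lingering_path g l m \<xi> (lingering_path g l m \<xi> 0 0 h0 + 2) (Suc h0) (Suc h - Suc h0)"
      by simp
    moreover have "envelope g l m \<xi> (Suc h) = path_step g l m \<xi> h (envelope g l m \<xi> h)"
      using False by (simp only: envelope.simps max_def) simp
    ultimately have "envelope g l m \<xi> (Suc h)
        \<le> lingering_path g l m \<xi> (lingering_path g l m \<xi> 0 0 h0 + 2) (Suc h0) (Suc h - Suc h0)"
      using path_step_mono[OF h0(2), of g l m \<xi> h] by simp
    thus ?thesis using h0(1) by (intro exI[of _ h0]) simp
  qed
qed simp

lemma reflected_cong_iff:
  "loop_cong l m i (2 * real h * l i - 2 * x) (l i * of_int s)
     \<longleftrightarrow> loop_cong l m i (2 * x) (l i * of_int (2 * int h - s))"
proof -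
  have "2 * real h * l i - l i * of_int s = l i * of_int (2 * int h - s)" by (simp add: algebra_simps)
  moreover have "loop_cong l m i (2 * real h * l i - 2 * x) (l i * of_int s)
     \<longleftrightarrow> loop_cong l m i (2 * x) (2 * real h * l i - l i * of_int s)"
    by (rule loop_cong_reflect)
  ultimately show ?thesis by simp
qed

lemma generic_double_cong:
  assumes gen: "generic_chain g l m" and i: "i \<in> {1..g}"
    and x: "loop_cong l m i x (l i * of_int a)" and x2: "loop_cong l m i (2 * x) (l i * of_int b)"
    and bound: "\<bar>b - 2 * a\<bar> \<le> 2 * int g - 2"
  shows "b = 2 * a"
proof (rule generic_cong_eq[OF gen i bound])
  have "loop_cong l m i (2 * x) (l i * of_int (2 * a))"
    using loop_cong_double[OF x] by (simp add: algebra_simps)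
  thus "loop_cong l m i (l i * of_int b) (l i * of_int (2 * a))"
    using x2 by (meson loop_cong_sym loop_cong_trans)
qed

text \<open>Let \<open>c\<close> be the path of \<open>\<xi>\<close>, \<open>w\<close> its envelope and \<open>s\<close> the path of the
  reflected targets \<open>2 (g - j) l_j - 2 \<xi>_j\<close> (the coordinates of \<open>K - 2D\<close> when \<open>\<xi>\<close> are those of
  \<open>D\<close>). As long as the envelope stays below \<open>g\<close>, genericity forbids the paths to linger
  simultaneously in incompatible ways, so that \<open>2h - s \<le> c + w\<close> and \<open>c < w\<close> at all times.\<close>

lemma envelope_invariant:
  assumes gen: "generic_chain g l m" and env: "envelope g l m \<xi> g \<le> int g - 1"
  shows "h \<le> g \<Longrightarrow>
    2 * int h - lingering_path g l m (\<lambda>j. 2 * real (g - j) * l j - 2 * \<xi> j) 0 0 h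
       \<le> lingering_path g l m \<xi> 0 0 h + envelope g l m \<xi> h
    \<and> lingering_path g l m \<xi> 0 0 h < envelope g l m \<xi> h"
proof (induction h)
  case (Suc h)
  define \<eta> where "\<eta> = (\<lambda>j. 2 * real (g - j) * l j - 2 * \<xi> j)"
  define c where "c = lingering_path g l m \<xi> 0 0 h"
  define w where "w = envelope g l m \<xi> h"
  define s where "s = lingering_path g l m \<eta> 0 0 h"
  define i where "i = g - h"
  have h: "h < g" using Suc.prems by simp
  hence i: "i \<in> {1..g}" unfolding i_def by auto
  have IH: "2 * int h - s \<le> c + w" "c < w"
    using Suc h unfolding c_def w_def s_def \<eta>_def by auto
  have ranges: "0 \<le> c" "c \<le> int h" "0 \<le> s" "s \<le> int h"
    using path_range[of 0 g l m \<xi> 0 h] path_range[of 0 g l m \<eta> 0 h] unfolding c_def s_def by auto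
  have "w \<le> int g - 1" using envelope_mono[of h g g l m \<xi>] h env unfolding w_def by simp
  define C where "C = loop_cong l m i (\<xi> i) (l i * of_int c)"
  define W where "W = loop_cong l m i (\<xi> i) (l i * of_int w)"
  define H where "H = loop_cong l m i (\<eta> i) (l i * of_int s)"
  have "\<eta> i = 2 * real h * l i - 2 * \<xi> i" unfolding \<eta>_def i_def using h by simp
  hence H_iff: "H \<longleftrightarrow> loop_cong l m i (2 * \<xi> i) (l i * of_int (2 * int h - s))"
    unfolding H_def by (simp add: reflected_cong_iff)
  have not_CW: "\<not> (C \<and> W)"
  proof
    assume "C \<and> W"
    hence "loop_cong l m i (l i * of_int c) (l i * of_int w)"
      unfolding C_def W_def by (meson loop_cong_sym loop_cong_trans)
    hence "c = w" using generic_cong_eq[OF gen i] IH(2) \<open>w \<le> int g - 1\<close> ranges by simp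
    thus False using IH(2) by simp
  qed
  have CH: "2 * int h - s = 2 * c" if C H
    using generic_double_cong[OF gen i] that h ranges unfolding C_def H_iff by simp
  have WH: False if W H
  proof -
    have "2 * int h - s = 2 * w"
      using generic_double_cong[OF gen i] that h ranges \<open>w \<le> int g - 1\<close> IH
      unfolding W_def H_iff by simp
    thus False using IH by simp
  qed
  have "lingering_path g l m \<xi> 0 0 (Suc h) = c + (if C then 0 else 1)"
    and "envelope g l m \<xi> (Suc h) = max (w + (if W then 0 else 1)) (c + 2)"
    and "lingering_path g l m \<eta> 0 0 (Suc h) = s + (if H then 0 else 1)"
    unfolding c_def w_def s_def C_def W_def H_def i_def by (simp_all add: path_step_def)
  thus ?case using IH not_CW CH WH unfolding \<eta>_def by (cases C; cases W; cases H) auto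
qed simp

lemma path_below_chips:
  assumes E: "is_divisor g l m E" "effective E" and b: "b \<le> g"
    and coords: "\<And>h. h < b \<Longrightarrow> loop_cong l m (g - h) (\<eta> (g - h)) (abel l (g - h) E)"
  shows "lingering_path g l m \<eta> 0 0 b \<le> chips_after E (g - b)"
proof -
  have "lingering_path g l m \<eta> 0 0 b \<le> chips_after E (g - (0 + b)) + 0"
  proof (rule path_le_chips[OF E b])
    fix h assume "0 \<le> h" "h < b" "chips_on E (g - h) = 0"
    thus "loop_cong l m (g - h) (\<eta> (g - h)) (l (g - h) * of_int (chips_after E (g - h) + 0))"
      using coords[of h] abel_no_chips_on[OF E, of "g - h"] by simp
  qed (use chips_after_nonneg[OF E] in simp_all)
  thus ?thesis by simp
qed

lemma path_le_degree:
  assumes E: "is_divisor g l m E" "effective E"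
    and coords: "\<And>j. j \<in> {1..g} \<Longrightarrow> loop_cong l m j (\<eta> j) (abel l j E)"
  shows "lingering_path g l m \<eta> 0 0 g \<le> deg E"
proof -
  have "lingering_path g l m \<eta> 0 0 g \<le> chips_after E (g - g)"
    by (rule path_below_chips[OF E order_refl]) (simp add: coords)
  thus ?thesis using chips_after_0[OF E] by simp
qed

section \<open>Divisors of positive rank\<close>

definition point :: "nat \<times> real \<Rightarrow> divisor" where
  "point q = (\<lambda>p. if p = q then 1 else 0)"

lemma point_facts:
  assumes "q \<in> Pts g l m"
  shows "is_divisor g l m (point q)" "effective (point q)" "deg (point q) = 1"
    "abel l j (point q) = abel_coord l j q"
proof -
  have supp: "supp (point q) = {q}" unfolding supp_def point_def by auto
  show "is_divisor g l m (point q)" using assms supp unfolding is_divisor_def supp_def by simp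
  show "effective (point q)" unfolding effective_def point_def by simp
  show "deg (point q) = 1" unfolding deg_def using supp[unfolded supp_def] by (simp add: point_def)
  show "abel l j (point q) = abel_coord l j q" unfolding abel_def supp by (simp add: point_def)
qed

text \<open>The vertex \<open>v_0 = (1, 0)\<close> serves as a base point whose coordinates all vanish.\<close>

lemma v0_Pts:
  assumes "1 \<le> g" "0 < l 1" "0 < m 1"
  shows "(1, 0) \<in> Pts g l m"
proof -
  have "(1::nat, 0::real) = loc g l 1 0" unfolding loc_def using assms by simp
  moreover have "(0::real) < circ l m 1" unfolding circ_def using assms by simp
  ultimately show ?thesis unfolding Pts_def using assms(1) by (intro CollectI exI[of _ 1] exI[of _ 0]) simp
qed

context
  fixes g l m D
  assumes pos: "\<forall>i\<in>{1..g}. 0 < l i \<and> 0 < m i" and g: "1 \<le> g" and D: "is_divisor g l m D"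
begin

lemma v0_point: "is_divisor g l m (point (1, 0))" "effective (point (1, 0))" "deg (point (1, 0)) = 1"
  "abel l j (point (1, 0)) = abel_coord l j (1, 0)"
proof -
  have "(1, 0) \<in> Pts g l m" using v0_Pts g pos by simp
  thus "is_divisor g l m (point (1, 0))" "effective (point (1, 0))" "deg (point (1, 0)) = 1"
    "abel l j (point (1, 0)) = abel_coord l j (1, 0)" by (rule point_facts)+
qed

lemma rank_ge_le_deg:
  assumes "rank_ge g l m D r"
  shows "int r \<le> deg D"
proof -
  text \<open>Remove \<open>r\<close> chips at \<open>v_0\<close>, written as a linear combination to reuse the linearity lemmas.\<close>
  define F where "F = (\<lambda>p. int r * point (1, 0) p + 0 * point (1, 0) p)"
  have F: "is_divisor g l m F" unfolding F_def by (rule divisor_lincomb[OF v0_point(1) v0_point(1)])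
  have "effective F" "deg F = int r" unfolding F_def
    using v0_point(2) linear_combination(1)[OF fin_supp[OF v0_point(1)] fin_supp[OF v0_point(1)],
      where a = "int r" and b = 0] v0_point(3) by (simp_all add: effective_def)
  note F = F this
  obtain E where E: "is_divisor g l m E" "effective E" "lin_equiv g l m (\<lambda>p. 1 * D p + (-1) * F p) E"
    using assms F unfolding rank_ge_def by auto
  have "deg E = deg D - deg F" using lin_equiv_combination(1)[OF pos D F(1) E(1,3)] by simp
  moreover have "0 \<le> deg E" using chips_after_0[OF E(1,2)] chips_after_nonneg[OF E(1,2), of 0] by simp
  ultimately show ?thesis using F(3) by simp
qed

text \<open>Hence the rank, defined as a greatest element, is attained.\<close>

lemma rank_witness:
  assumes "1 \<le> rank g l m D"
  obtains r where "1 \<le> r" "rank_ge g l m D r"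
proof -
  have r0: "rank_ge g l m D 0" and ge1: "1 \<le> (GREATEST r. rank_ge g l m D r)"
    using assms unfolding rank_def by (auto split: if_splits)
  have "rank_ge g l m D (GREATEST r. rank_ge g l m D r)"
    by (rule GreatestI_nat[where P = "rank_ge g l m D" and b = "nat (deg D)", OF r0])
      (use rank_ge_le_deg in fastforce)
  thus thesis using ge1 that by blast
qed

lemma remove_point:
  assumes rank: "1 \<le> rank g l m D" and q: "q \<in> Pts g l m"
  obtains E where "is_divisor g l m E" "effective E" "deg E \<le> deg D - 1"
    "\<And>j. j \<in> {1..g} \<Longrightarrow> loop_cong l m j (abel l j D - abel_coord l j q) (abel l j E)"
proof -
  obtain r where r: "1 \<le> r" "rank_ge g l m D r" using rank_witness[OF rank] .
  define F where "F = (\<lambda>p. 1 * point q p + (int r - 1) * point (1, 0) p)"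
  note pq = point_facts[OF q]
  have F: "is_divisor g l m F" unfolding F_def by (rule divisor_lincomb[OF pq(1) v0_point(1)])
  have "effective F" unfolding F_def using pq(2) v0_point(2) r(1) by (simp add: effective_def)
  note lc = linear_combination[OF fin_supp[OF pq(1)] fin_supp[OF v0_point(1)], where a = 1 and b = "int r - 1"]
  have "deg F = int r" unfolding F_def using lc(1) pq(3) v0_point(3) by simp
  moreover have "abel l j F = abel_coord l j q" if "j \<in> {1..g}" for j
    unfolding F_def using lc(2) pq(4) v0_point(4) that by (simp add: abel_coord_def)
  moreover obtain E where E: "is_divisor g l m E" "effective E"
    "lin_equiv g l m (\<lambda>p. 1 * D p + (-1) * F p) E"
    using r(2) F \<open>effective F\<close> \<open>deg F = int r\<close> unfolding rank_ge_def by auto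
  ultimately show thesis using that[OF E(1,2)] r(1)
    lin_equiv_combination[OF pos D F(1) E(1,3)] by simp
qed

end

lemma avoid_residues:
  fixes n a :: real
  assumes n: "0 < n" and V: "finite V"
  obtains t where "0 \<le> t" "t < n" "t \<noteq> a" "\<And>v z. v \<in> V \<Longrightarrow> v - t \<noteq> of_int z * n"
proof -
  define residue where "residue = (\<lambda>v. v - n * of_int \<lfloor>v / n\<rfloor>)"
  have "\<not> {0..<n} \<subseteq> insert a (residue ` V)"
    using V infinite_Ico[OF n] finite_subset by blast
  then obtain t where "t \<in> {0..<n}" "t \<notin> insert a (residue ` V)" by blast
  hence t: "0 \<le> t" "t < n" "t \<noteq> a" "t \<notin> residue ` V" by auto
  have "v - t \<noteq> of_int z * n" if v: "v \<in> V" for v z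
  proof
    assume "v - t = of_int z * n"
    hence "v / n = of_int z + t / n" using n by (simp add: field_simps)
    moreover have "0 \<le> t / n" "t / n < 1" using t n by auto
    ultimately have "\<lfloor>v / n\<rfloor> = z" by (intro floor_unique) auto
    hence "t = residue v" unfolding residue_def using \<open>v - t = of_int z * n\<close> by (simp add: algebra_simps)
    thus False using t(4) v by auto
  qed
  thus thesis using t that by blast
qed

text \<open>Removing a generic point of loop \<open>k\<close> from a divisor of positive rank: the result is
  equivalent to an effective divisor \<open>E\<close> with a chip on loop \<open>k\<close>, whose coordinates on the other
  loops are those of \<open>D\<close>, shifted by \<open>l_j\<close> on the loops before \<open>k\<close> (which see the point at the far
  end of their top edge). The point is chosen so that no multiple \<open>s l_k\<close> with
  \<open>0 \<le> s \<le> deg D\<close> matches it, which forces the chip on loop \<open>k\<close>.\<close>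

lemma remove_generic_point:
  assumes pos: "\<forall>i\<in>{1..g}. 0 < l i \<and> 0 < m i" and g: "1 \<le> g" and D: "is_divisor g l m D"
    and rank: "1 \<le> rank g l m D" and k: "k \<in> {1..g}"
  obtains E where "is_divisor g l m E" "effective E" "deg E \<le> deg D - 1" "1 \<le> chips_on E k"
    "\<And>j. j \<in> {1..g} \<Longrightarrow> j \<noteq> k \<Longrightarrow>
       loop_cong l m j (abel l j D - (if k < j then 0 else l j)) (abel l j E)"
proof -
  have circ: "0 < circ l m k" using pos k unfolding circ_def by (simp add: add_pos_pos)
  obtain t where t: "0 \<le> t" "t < circ l m k" "t \<noteq> l k"
    and avoid: "\<And>v z. v \<in> (\<lambda>s. abel l k D - l k * of_int s) ` {0..deg D} \<Longrightarrow>
       v - t \<noteq> of_int z * circ l m k"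
    using avoid_residues[OF circ, of "(\<lambda>s. abel l k D - l k * of_int s) ` {0..deg D}" "l k"] by blast
  have "loc g l k t = (k, t)" unfolding loc_def using t(3) by simp
  hence "(k, t) \<in> incidences g l m (k, t)" unfolding incidences_def using k t(1,2) by simp
  hence "(k, t) \<in> Pts g l m" by (rule incidence_in_Pts)
  then obtain E where E: "is_divisor g l m E" "effective E" "deg E \<le> deg D - 1"
    and coords: "\<And>j. j \<in> {1..g} \<Longrightarrow> loop_cong l m j (abel l j D - abel_coord l j (k, t)) (abel l j E)"
    using remove_point[OF pos g D rank] by metis
  have coord: "abel_coord l j (k, t) = (if k < j then 0 else if k = j then t else l j)" for j
    unfolding abel_coord_def by simp
  have "1 \<le> chips_on E k"
  proof (rule ccontr)
    assume "\<not> 1 \<le> chips_on E k"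
    hence "chips_on E k = 0" using chips_on_nonneg[OF E(1,2), of k] by simp
    hence "loop_cong l m k (abel l k D - t) (l k * of_int (chips_after E k))"
      using coords[OF k] abel_no_chips_on[OF E(1,2)] by (simp add: coord)
    then obtain z :: int where "(abel l k D - t) - l k * of_int (chips_after E k) = of_int z * circ l m k"
      unfolding loop_cong_def by blast
    hence "(abel l k D - l k * of_int (chips_after E k)) - t = of_int z * circ l m k"
      by (simp add: algebra_simps)
    moreover have "chips_after E k \<in> {0..deg D}"
      using chips_after_nonneg[OF E(1,2)] chips_after_le_deg[OF E(1,2), of k] E(3) by simp
    ultimately show False using avoid by blast
  qed
  moreover have "loop_cong l m j (abel l j D - (if k < j then 0 else l j)) (abel l j E)"
    if "j \<in> {1..g}" "j \<noteq> k" for j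
    using coords[OF that(1)] that(2)[symmetric] by (cases "k < j") (simp_all add: coord)
  ultimately show thesis using that E by blast
qed

text \<open>The heart of the argument: if \<open>r(D) \<ge> 1\<close>, restarting the path of the coordinates of \<open>D\<close> two
  units higher at any time \<open>h0\<close> still ends below \<open>deg D\<close>. Remove a generic point of the loop
  \<open>k = g - h0\<close> visited at time \<open>h0\<close>, obtaining \<open>E\<close>. Up to time \<open>h0\<close> the path stays below the chips
  of \<open>E\<close> already passed; the chip of \<open>E\<close> on loop \<open>k\<close> pays for one unit of the restart; and on the
  remaining loops the shift by \<open>l_j\<close> is absorbed by the margin \<open>\<delta> = 1\<close>.\<close>

lemma restarted_path_le_degree:
  assumes gen: "generic_chain g l m" and g: "1 \<le> g" and D: "is_divisor g l m D"
    and rank: "1 \<le> rank g l m D" and h0: "h0 < g"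
  defines "\<xi> \<equiv> \<lambda>j. abel l j D"
  shows "lingering_path g l m \<xi> (lingering_path g l m \<xi> 0 0 h0 + 2) (Suc h0) (g - Suc h0) \<le> deg D"
proof -
  note pos = generic_positive[OF gen]
  define k where "k = g - h0"
  have k: "k \<in> {1..g}" using h0 unfolding k_def by auto
  obtain E where E: "is_divisor g l m E" "effective E" "deg E \<le> deg D - 1" and chip: "1 \<le> chips_on E k"
    and coords: "\<And>j. j \<in> {1..g} \<Longrightarrow> j \<noteq> k \<Longrightarrow>
       loop_cong l m j (\<xi> j - (if k < j then 0 else l j)) (abel l j E)"
    using remove_generic_point[OF pos g D rank k] unfolding \<xi>_def by metis
  have "lingering_path g l m \<xi> 0 0 h0 \<le> chips_after E (g - h0)"
  proof (rule path_below_chips[OF E(1,2)])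
    fix h assume "h < h0"
    hence "g - h \<in> {1..g}" "k < g - h" using h0 unfolding k_def by auto
    thus "loop_cong l m (g - h) (\<xi> (g - h)) (abel l (g - h) E)" using coords[of "g - h"] by simp
  qed (use h0 in simp)
  moreover have "g - Suc h0 = k - 1" unfolding k_def by simp
  ultimately have restart: "lingering_path g l m \<xi> 0 0 h0 + 2 \<le> chips_after E (g - Suc h0) + 1"
    using chip chips_after_step[OF E(1,2), of k] k unfolding k_def by simp
  have "lingering_path g l m \<xi> (lingering_path g l m \<xi> 0 0 h0 + 2) (Suc h0) (g - Suc h0)
      \<le> chips_after E (g - (Suc h0 + (g - Suc h0))) + 1"
  proof (rule path_le_chips[OF E(1,2) order_refl _ restart])
    fix h assume h: "Suc h0 \<le> h" "h < g" "chips_on E (g - h) = 0"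
    hence "g - h \<in> {1..g}" "g - h \<noteq> k" "\<not> k < g - h" unfolding k_def by auto
    hence "loop_cong l m (g - h) (\<xi> (g - h) - l (g - h)) (l (g - h) * of_int (chips_after E (g - h)))"
      using coords[of "g - h"] abel_no_chips_on[OF E(1,2) h(3)] by simp
    thus "loop_cong l m (g - h) (\<xi> (g - h)) (l (g - h) * of_int (chips_after E (g - h) + 1))"
      unfolding loop_cong_shift by (simp add: algebra_simps)
  qed (use h0 in simp)
  also have "\<dots> \<le> deg D" using chips_after_0[OF E(1,2)] E(3) h0 by simp
  finally show ?thesis .
qed

lemma envelope_le_degree:
  assumes gen: "generic_chain g l m" and g: "1 \<le> g" and D: "is_divisor g l m D"
    and rank: "1 \<le> rank g l m D"
  shows "envelope g l m (\<lambda>j. abel l j D) g \<le> deg D"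
proof -
  obtain h0 where "h0 < g" and "envelope g l m (\<lambda>j. abel l j D) g
      \<le> lingering_path g l m (\<lambda>j. abel l j D) (lingering_path g l m (\<lambda>j. abel l j D) 0 0 h0 + 2)
           (Suc h0) (g - Suc h0)"
    using envelope_restart[OF g] by blast
  thus ?thesis using restarted_path_le_degree[OF gen g D rank \<open>h0 < g\<close>] by simp
qed

section \<open>The canonical divisor\<close>

lemma canonical_eq: "canonical g l p = (if p \<in> (\<lambda>i. (Suc i, 0::real)) ` {1..<g} then 2 else 0)"
proof -
  have "vtx g l i = (Suc i, 0)" if "i \<in> {1..<g}" for i
    using that unfolding vtx_def loc_def by simp
  hence "(\<exists>i\<in>{1..<g}. p = vtx g l i) \<longleftrightarrow> p \<in> (\<lambda>i. (Suc i, 0::real)) ` {1..<g}" by auto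
  thus ?thesis unfolding canonical_def by simp
qed

lemma supp_canonical: "supp (canonical g l) = (\<lambda>i. (Suc i, 0::real)) ` {1..<g}"
  unfolding supp_def canonical_eq by auto

lemma canonical_divisor:
  assumes pos: "\<forall>i\<in>{1..g}. 0 < l i \<and> 0 < m i"
  shows "is_divisor g l m (canonical g l)"
proof -
  have "(Suc i, 0) \<in> Pts g l m" if i: "i \<in> {1..<g}" for i
  proof (rule incidence_in_Pts)
    have "0 < l i" "0 < m i" using pos i by auto
    thus "(i, l i) \<in> incidences g l m (Suc i, 0)"
      using i unfolding incidences_def loc_def circ_def by auto
  qed
  thus ?thesis unfolding is_divisor_def using supp_canonical[of g l, unfolded supp_def] by auto
qed

lemma canonical_sum:
  "(\<Sum>p\<in>supp (canonical g l). real_of_int (canonical g l p) * f p) = (\<Sum>i\<in>{1..<g}. 2 * f (Suc i, 0))"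
  unfolding supp_canonical by (subst sum.reindex) (auto intro: inj_onI simp: canonical_eq)

lemma canonical_deg:
  assumes "1 \<le> g"
  shows "deg (canonical g l) = 2 * (int g - 1)"
proof -
  have "real_of_int (deg (canonical g l)) = (\<Sum>i\<in>{1..<g}. 2 * 1)"
    unfolding deg_def supp_def[symmetric] using canonical_sum[of g l "\<lambda>_. 1"] by simp
  thus ?thesis using assms by simp
qed

text \<open>Each vertex \<open>v_i\<close> with \<open>i \<ge> j\<close> has \<open>j\<close>-th coordinate \<open>l_j\<close>; the others have coordinate \<open>0\<close>.\<close>

lemma canonical_abel:
  assumes j: "j \<in> {1..g}"
  shows "abel l j (canonical g l) = 2 * real (g - j) * l j"
proof -
  have "abel l j (canonical g l) = (\<Sum>i\<in>{1..<g}. 2 * abel_coord l j (Suc i, 0))"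
    unfolding abel_def by (rule canonical_sum)
  also have "\<dots> = (\<Sum>i\<in>{j..<g}. 2 * l j)"
    by (rule sum.mono_neutral_cong_right) (use j in \<open>auto simp: abel_coord_def\<close>)
  finally show ?thesis by simp
qed

lemma residual_invariants:
  assumes pos: "\<forall>i\<in>{1..g}. 0 < l i \<and> 0 < m i" and g: "1 \<le> g"
    and D: "is_divisor g l m D" and E: "is_divisor g l m E"
    and equiv: "lin_equiv g l m (\<lambda>p. canonical g l p - 2 * D p) E"
  shows "deg E = 2 * (int g - 1) - 2 * deg D"
    and "j \<in> {1..g} \<Longrightarrow> loop_cong l m j (2 * real (g - j) * l j - 2 * abel l j D) (abel l j E)"
proof -
  have "lin_equiv g l m (\<lambda>p. 1 * canonical g l p + (-2) * D p) E" using equiv by simp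
  note invariants = lin_equiv_combination[OF pos canonical_divisor[OF pos] D E this]
  show "deg E = 2 * (int g - 1) - 2 * deg D" using invariants(1) canonical_deg[OF g] by simp
  show "loop_cong l m j (2 * real (g - j) * l j - 2 * abel l j D) (abel l j E)" if "j \<in> {1..g}"
    using invariants(2)[OF that] canonical_abel[OF that] by simp
qed

theorem theorem1p1:
  fixes g :: nat and l m :: "nat \<Rightarrow> real"
  assumes "1 \<le> g"
    and "generic_chain g l m"
  shows "\<not> (\<exists>D E. is_divisor g l m D \<and> 1 \<le> rank g l m D \<and>
              is_divisor g l m E \<and> effective E \<and>
              lin_equiv g l m (\<lambda>p. canonical g l p - 2 * D p) E)"
proof
  assume "\<exists>D E. is_divisor g l m D \<and> 1 \<le> rank g l m D \<and>
              is_divisor g l m E \<and> effective E \<and>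
              lin_equiv g l m (\<lambda>p. canonical g l p - 2 * D p) E"
  then obtain D E where D: "is_divisor g l m D" and rank: "1 \<le> rank g l m D"
    and E: "is_divisor g l m E" "effective E"
    and equiv: "lin_equiv g l m (\<lambda>p. canonical g l p - 2 * D p) E" by blast
  note g = assms(1) and gen = assms(2)
  note pos = generic_positive[OF gen]
  define \<xi> where "\<xi> = (\<lambda>j. abel l j D)"
  define \<eta> where "\<eta> = (\<lambda>j. 2 * real (g - j) * l j - 2 * \<xi> j)"
  note residual = residual_invariants[OF pos g D E(1) equiv]
  have "deg D \<le> int g - 1" using residual(1) chips_after_0[OF E] chips_after_nonneg[OF E, of 0] by simp
  have envelope: "envelope g l m \<xi> g \<le> deg D"
    unfolding \<xi>_def by (rule envelope_le_degree[OF gen g D rank])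
  have residual_path: "lingering_path g l m \<eta> 0 0 g \<le> deg E"
    unfolding \<eta>_def \<xi>_def by (rule path_le_degree[OF E], rule residual(2))
  have "2 * int g - lingering_path g l m \<eta> 0 0 g \<le> lingering_path g l m \<xi> 0 0 g + envelope g l m \<xi> g"
    and "lingering_path g l m \<xi> 0 0 g < envelope g l m \<xi> g"
    using envelope_invariant[OF gen, of \<xi> g] envelope \<open>deg D \<le> int g - 1\<close> unfolding \<eta>_def by simp_all
  text \<open>Hence \<open>2 deg D + 2 \<le> 2g - deg E \<le> 2g - s \<le> c + w < 2w \<le> 2 deg D\<close>.\<close>
  thus False using envelope residual_path residual(1) by auto
qed

end
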